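(* Let $\alpha$ be Diophantine, $\theta\in\mathbb{R}$ and $\epsilon_0>0$. There exists $c=c(\alpha,\epsilon_0)>0$ such that, with $0=n_0,n_1,n_2,\dots$ the $\epsilon_0$-resonances associated to $\alpha$ and $\theta$ ordered so that $|n_0|<|n_1|\le|n_2|\le\cdots$ (with the convention $|n_{j+1}|=\infty$ if $n_j$ is the last resonance), one has for every $j$ $$|n_{j+1}|\ge c\,\|2\theta-n_j\alpha\|_{\mathbb{R}/\mathbb{Z}}^{-c}\ge c\,e^{c\epsilon_0|n_j|}.$$
   Context: An irrational $\alpha$ is Diophantine if $\sup_n\ln q_{n+1}/\ln q_n<\infty$, where $q_n$ are the denominators of its continued fraction approximants. $\|\cdot\|_{\mathbb{R}/\mathbb{Z}}$ is the distance to the nearest integer. Given $\alpha,\theta,\epsilon_0$, an integer $k$ is an $\epsilon_0$-resonance if $\|2\theta-k\alpha\|_{\mathbb{R}/\mathbb{Z}}\le e^{-|k|\epsilon_0}$ and $\|2\theta-k\alpha\|_{\mathbb{R}/\mathbb{Z}}=\min_{|j|\le|k|}\|2\theta-j\alpha\|_{\mathbb{R}/\mathbb{Z}}$ ($0$ is always a resonance). *)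

theory Defs
  imports Complex_Main
begin

definition dZ :: "real \<Rightarrow> real" where
  "dZ x = min (frac x) (1 - frac x)"

text \<open>Continued fraction expansion of x: complete quotients, partial quotients a_n,
  and denominators q_n of the convergents (q_0 = 1, q_1 = a_1, q_(n+2) = a_(n+2) q_(n+1) + q_n).\<close>
fun cf_rem :: "real \<Rightarrow> nat \<Rightarrow> real" where
  "cf_rem x 0 = x"
| "cf_rem x (Suc n) = 1 / frac (cf_rem x n)"

definition cf_coeff :: "real \<Rightarrow> nat \<Rightarrow> int" where
  "cf_coeff x n = \<lfloor>cf_rem x n\<rfloor>"

fun cf_denom :: "real \<Rightarrow> nat \<Rightarrow> int" where
  "cf_denom x 0 = 1"
| "cf_denom x (Suc 0) = cf_coeff x 1"
| "cf_denom x (Suc (Suc n)) = cf_coeff x (Suc (Suc n)) * cf_denom x (Suc n) + cf_denom x n"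

definition diophantine :: "real \<Rightarrow> bool" where
  "diophantine \<alpha> \<longleftrightarrow> \<alpha> \<notin> \<rat> \<and>
     bdd_above (range (\<lambda>n. ln (real_of_int (cf_denom \<alpha> (Suc n))) / ln (real_of_int (cf_denom \<alpha> n))))"

definition resonance :: "real \<Rightarrow> real \<Rightarrow> real \<Rightarrow> int \<Rightarrow> bool" where
  "resonance \<alpha> \<theta> \<epsilon>0 k \<longleftrightarrow>
     dZ (2 * \<theta> - of_int k * \<alpha>) \<le> exp (- of_int \<bar>k\<bar> * \<epsilon>0) \<and>
     (\<forall>j. \<bar>j\<bar> \<le> \<bar>k\<bar> \<longrightarrow> dZ (2 * \<theta> - of_int k * \<alpha>) \<le> dZ (2 * \<theta> - of_int j * \<alpha>))"

end

theory Submission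
  imports Defs
begin

text \<open>For Diophantine \<open>\<alpha>\<close> the convergent denominators grow at most polynomially,
  q_(n+1) \<le> K q_n^\<tau>. Together with the best approximation property of convergents,
  \<parallel>m\<alpha>\<parallel> \<ge> \<parallel>q_n \<alpha>\<parallel> \<ge> 1/(2 q_(n+1)) for 0 < |m| < q_(n+1), this gives \<parallel>m\<alpha>\<parallel> \<ge> C |m|^(-\<tau>)
  for all m \<noteq> 0. If k \<noteq> k' are resonances with |k| \<le> |k'|, minimality of k' gives
  \<parallel>2\<theta> - k'\<alpha>\<parallel> \<le> \<parallel>2\<theta> - k\<alpha>\<parallel>, so C (2|k'|)^(-\<tau>) \<le> \<parallel>(k' - k)\<alpha>\<parallel> \<le> 2 \<parallel>2\<theta> - k\<alpha>\<parallel>, which bounds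
  |k'| below by a power of \<parallel>2\<theta> - k\<alpha>\<parallel>^(-1). The second inequality is just the defining bound
  \<parallel>2\<theta> - k\<alpha>\<parallel> \<le> exp (-\<epsilon>0 |k|) of a resonance.\<close>

text \<open>Convergents with the index shifted by one: \<open>cf_q x (Suc n)\<close> and \<open>cf_p x (Suc n)\<close> are
  q_n and p_n, and index 0 holds q_(-1) = 0, p_(-1) = 1. Then \<open>cf_dist x n\<close> = \<bar>q_(n-1) x - p_(n-1)\<bar>.\<close>

fun cf_q :: "real \<Rightarrow> nat \<Rightarrow> int" where
  "cf_q x 0 = 0"
| "cf_q x (Suc 0) = 1"
| "cf_q x (Suc (Suc n)) = cf_coeff x (Suc n) * cf_q x (Suc n) + cf_q x n"

fun cf_p :: "real \<Rightarrow> nat \<Rightarrow> int" where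
  "cf_p x 0 = 1"
| "cf_p x (Suc 0) = cf_coeff x 0"
| "cf_p x (Suc (Suc n)) = cf_coeff x (Suc n) * cf_p x (Suc n) + cf_p x n"

fun cf_dist :: "real \<Rightarrow> nat \<Rightarrow> real" where
  "cf_dist x 0 = 1"
| "cf_dist x (Suc n) = cf_dist x n * frac (cf_rem x n)"

lemma cf_denom_eq_cf_q: "cf_denom x n = cf_q x (Suc n)"
  by (induction x n rule: cf_denom.induct) auto

lemma cf_rem_not_rational:
  assumes "x \<notin> \<rat>"
  shows "cf_rem x n \<notin> \<rat>"
proof (induction n)
  case 0
  then show ?case using assms by simp
next
  case (Suc n)
  show ?case
  proof
    assume "cf_rem x (Suc n) \<in> \<rat>"
    then have "frac (cf_rem x n) \<in> \<rat>"
      using Rats_inverse by (fastforce simp: inverse_eq_divide)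
    then have "frac (cf_rem x n) + of_int \<lfloor>cf_rem x n\<rfloor> \<in> \<rat>"
      by simp
    then show False
      using Suc by (simp add: frac_def)
  qed
qed

lemma frac_cf_rem_pos:
  assumes "x \<notin> \<rat>"
  shows "0 < frac (cf_rem x n)"
  using cf_rem_not_rational[OF assms, of n] frac_eq_0_iff Ints_subset_Rats frac_ge_0
  by (metis order_le_less subsetD)

lemma cf_coeff_ge_1:
  assumes "x \<notin> \<rat>"
  shows "1 \<le> cf_coeff x (Suc n)"
proof -
  have "1 < cf_rem x (Suc n)"
    using frac_cf_rem_pos[OF assms, of n] frac_lt_1[of "cf_rem x n"] by (simp add: field_simps)
  then show ?thesis
    unfolding cf_coeff_def by linarith
qed

lemma cf_dist_pos:
  assumes "x \<notin> \<rat>"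
  shows "0 < cf_dist x n"
  by (induction n) (use frac_cf_rem_pos[OF assms] in auto)

lemma cf_dist_Suc_le:
  assumes "x \<notin> \<rat>"
  shows "cf_dist x (Suc n) \<le> cf_dist x n"
  using cf_dist_pos[OF assms, of n] frac_lt_1[of "cf_rem x n"]
  by (simp add: mult_le_cancel_left1)

lemma cf_dist_Suc_Suc:
  assumes "x \<notin> \<rat>"
  shows "cf_dist x (Suc (Suc n)) = cf_dist x n - cf_coeff x (Suc n) * cf_dist x (Suc n)"
proof -
  have nz: "frac (cf_rem x n) \<noteq> 0"
    using frac_cf_rem_pos[OF assms, of n] by simp
  have "cf_dist x (Suc (Suc n)) = cf_dist x n * frac (cf_rem x n) * frac (cf_rem x (Suc n))"
    by simp
  also have "\<dots> = cf_dist x n * frac (cf_rem x n) * (1 / frac (cf_rem x n) - cf_coeff x (Suc n))"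
    unfolding cf_coeff_def by (simp add: frac_def)
  also have "\<dots> = cf_dist x n - cf_coeff x (Suc n) * cf_dist x (Suc n)"
    using nz by (simp del: cf_rem.simps add: field_simps)
  finally show ?thesis .
qed

lemma cf_approx_error:
  assumes "x \<notin> \<rat>"
  shows "of_int (cf_q x n) * x - of_int (cf_p x n) = (-1) ^ Suc n * cf_dist x n"
proof -
  define e where "e k = of_int (cf_q x k) * x - of_int (cf_p x k)" for k
  have "e n = (-1) ^ Suc n * cf_dist x n \<and> e (Suc n) = (-1) ^ Suc (Suc n) * cf_dist x (Suc n)"
  proof (induction n)
    case 0
    then show ?case
      by (simp add: e_def frac_def cf_coeff_def)
  next
    case (Suc n)
    have "e (Suc (Suc n)) = of_int (cf_coeff x (Suc n)) * e (Suc n) + e n"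
      by (simp add: e_def algebra_simps)
    also have "\<dots> = (-1) ^ Suc (Suc (Suc n)) * cf_dist x (Suc (Suc n))"
      using Suc by (simp only: cf_dist_Suc_Suc[OF assms]) (simp add: algebra_simps)
    finally show ?case
      using Suc by simp
  qed
  then show ?thesis
    by (simp add: e_def)
qed

lemma cf_det: "cf_q x (Suc n) * cf_p x n - cf_q x n * cf_p x (Suc n) = (-1) ^ n"
proof (induction n)
  case (Suc n)
  have "cf_q x (Suc (Suc n)) * cf_p x (Suc n) - cf_q x (Suc n) * cf_p x (Suc (Suc n))
      = - (cf_q x (Suc n) * cf_p x n - cf_q x n * cf_p x (Suc n))"
    by (simp add: algebra_simps)
  then show ?case
    using Suc by simp
qed simp

lemma cf_q_cf_dist_eq_1:
  assumes "x \<notin> \<rat>"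
  shows "of_int (cf_q x (Suc n)) * cf_dist x n + of_int (cf_q x n) * cf_dist x (Suc n) = 1"
proof (induction n)
  case (Suc n)
  then show ?case
    by (simp del: cf_dist.simps cf_rem.simps add: cf_dist_Suc_Suc[OF assms] algebra_simps)
qed simp

lemma cf_q_nonneg_Suc_pos:
  assumes "x \<notin> \<rat>"
  shows "0 \<le> cf_q x n \<and> 1 \<le> cf_q x (Suc n)"
proof (induction n)
  case (Suc n)
  have "1 * 1 \<le> cf_coeff x (Suc n) * cf_q x (Suc n)"
    using cf_coeff_ge_1[OF assms, of n] Suc by (intro mult_mono) auto
  then show ?case
    using Suc by simp
qed simp

lemma cf_q_nonneg:
  assumes "x \<notin> \<rat>"
  shows "0 \<le> cf_q x n"
  using cf_q_nonneg_Suc_pos[OF assms] by blast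

lemma cf_q_pos:
  assumes "x \<notin> \<rat>" and "0 < n"
  shows "1 \<le> cf_q x n"
  using cf_q_nonneg_Suc_pos[OF assms(1), of "n - 1"] assms(2) by simp

lemma cf_q_Suc_Suc_ge:
  assumes "x \<notin> \<rat>"
  shows "cf_q x (Suc n) + cf_q x n \<le> cf_q x (Suc (Suc n))"
proof -
  have "cf_q x (Suc n) \<le> cf_coeff x (Suc n) * cf_q x (Suc n)"
    using cf_coeff_ge_1[OF assms, of n] cf_q_nonneg[OF assms, of "Suc n"]
    by (simp add: mult_le_cancel_right1)
  then show ?thesis
    by simp
qed

lemma cf_q_mono:
  assumes "x \<notin> \<rat>" and "m \<le> n"
  shows "cf_q x m \<le> cf_q x n"
proof (rule lift_Suc_mono_le[OF _ assms(2)])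
  fix k
  show "cf_q x k \<le> cf_q x (Suc k)"
    using cf_q_Suc_Suc_ge[OF assms(1), of "k - 1"] cf_q_nonneg[OF assms(1), of "k - 1"]
    by (cases k) simp_all
qed

lemma cf_q_ge_index:
  assumes "x \<notin> \<rat>"
  shows "int n \<le> cf_q x (Suc n)"
proof (induction n)
  case (Suc n)
  have "1 \<le> cf_q x (Suc (Suc 0))"
    using cf_q_pos[OF assms, of 2] by (simp add: numeral_2_eq_2)
  moreover have "n = 0 \<or> 1 \<le> cf_q x n"
    using cf_q_pos[OF assms, of n] by auto
  ultimately show ?case
    using Suc cf_q_Suc_Suc_ge[OF assms, of n] by fastforce
qed simp

lemma small_combination_coeff_signs:
  fixes a b q q' m :: int
  assumes m: "m = a * q + b * q'" and "0 \<le> q" and "m \<noteq> 0" and "\<bar>m\<bar> < q'"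
  shows "a \<noteq> 0 \<and> a * b \<le> 0"
proof -
  have "0 < q'"
    using assms(4) by linarith
  then have pos: "q' \<le> c * q'" if "0 < c" for c
    using that by (simp add: mult_le_cancel_right1)
  have neg: "c * q' \<le> - q'" if "c < 0" for c
    using pos[of "- c"] that by simp
  have "a \<noteq> 0"
  proof
    assume "a = 0"
    then show False
      using m assms(3,4) pos[of b] neg[of b] by (cases b "0::int" rule: linorder_cases) auto
  qed
  moreover have "\<not> (0 < a \<and> 0 < b)"
    using m assms(2,4) pos[of b] mult_nonneg_nonneg[of a q] by linarith
  moreover have "\<not> (a < 0 \<and> b < 0)"
    using m assms(2,4) neg[of b] mult_nonpos_nonneg[of a q] by linarith
  ultimately show ?thesis
    by (auto simp: mult_le_0_iff)
qed

lemma abs_add_ge_left_if_same_sign: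
  fixes u v :: real
  assumes "0 \<le> u * v"
  shows "\<bar>u\<bar> \<le> \<bar>u + v\<bar>"
  using assms by (auto simp: zero_le_mult_iff)

lemma cf_coordinates:
  "\<exists>a b. m = a * cf_q x n + b * cf_q x (Suc n) \<and> p = a * cf_p x n + b * cf_p x (Suc n)"
proof -
  define s :: int where "s = (-1) ^ n"
  have s: "s * s = 1"
    unfolding s_def by (simp flip: power_mult_distrib)
  have det: "cf_q x (Suc n) * cf_p x n - cf_q x n * cf_p x (Suc n) = s"
    unfolding s_def by (rule cf_det)
  define a where "a = s * (p * cf_q x (Suc n) - m * cf_p x (Suc n))"
  define b where "b = s * (m * cf_p x n - p * cf_q x n)"
  have "a * cf_q x n + b * cf_q x (Suc n) = s * m * (cf_q x (Suc n) * cf_p x n - cf_q x n * cf_p x (Suc n))"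
    unfolding a_def b_def by (simp add: algebra_simps)
  then have "m = a * cf_q x n + b * cf_q x (Suc n)"
    using det s by (simp add: mult.assoc)
  moreover have "a * cf_p x n + b * cf_p x (Suc n) = s * p * (cf_q x (Suc n) * cf_p x n - cf_q x n * cf_p x (Suc n))"
    unfolding a_def b_def by (simp add: algebra_simps)
  then have "p = a * cf_p x n + b * cf_p x (Suc n)"
    using det s by (simp add: mult.assoc)
  ultimately show ?thesis
    by blast
qed

lemma cf_best_approximation:
  assumes irr: "x \<notin> \<rat>" and "m \<noteq> 0" and "\<bar>m\<bar> < cf_q x (Suc n)"
  shows "cf_dist x n \<le> \<bar>of_int m * x - of_int p\<bar>"
proof -
  obtain a b where m: "m = a * cf_q x n + b * cf_q x (Suc n)"
    and p: "p = a * cf_p x n + b * cf_p x (Suc n)"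
    using cf_coordinates by blast
  have "a \<noteq> 0" and ab: "a * b \<le> 0"
    using small_combination_coeff_signs[OF m cf_q_nonneg[OF irr] assms(2,3)] by auto
  define e where "e k = of_int (cf_q x k) * x - of_int (cf_p x k)" for k
  have e: "e k = (-1) ^ Suc k * cf_dist x k" for k
    unfolding e_def by (rule cf_approx_error[OF irr])
  have lin: "of_int m * x - of_int p = of_int a * e n + of_int b * e (Suc n)"
    unfolding m p e_def by (simp add: algebra_simps)
  \<comment> \<open>\<open>e n\<close>, \<open>e (Suc n)\<close> have opposite signs and so do \<open>a\<close>, \<open>b\<close>: both summands of \<open>lin\<close> point the same way\<close>
  have "e n * e (Suc n) = - (cf_dist x n * cf_dist x (Suc n))"
    unfolding e by (simp add: algebra_simps flip: power_add power_mult_distrib del: cf_dist.simps)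
  then have "e n * e (Suc n) \<le> 0"
    using cf_dist_pos[OF irr, of n] cf_dist_pos[OF irr, of "Suc n"] by simp
  moreover have "of_int (a * b) \<le> (0::real)"
    using ab by linarith
  ultimately have "0 \<le> of_int (a * b) * (e n * e (Suc n))"
    by (intro mult_nonpos_nonpos)
  also have "\<dots> = (of_int a * e n) * (of_int b * e (Suc n))"
    by (simp add: algebra_simps)
  finally have same_sign: "0 \<le> (of_int a * e n) * (of_int b * e (Suc n))" .
  have "cf_dist x n \<le> \<bar>of_int a * e n\<bar>"
    using \<open>a \<noteq> 0\<close> cf_dist_pos[OF irr, of n]
    by (simp add: e abs_mult mult_le_cancel_right1 del: of_int_abs)
  then show ?thesis
    using abs_add_ge_left_if_same_sign[OF same_sign] lin by linarith
qed

lemma dZ_le_abs_diff_int: "dZ z \<le> \<bar>z - of_int n\<bar>"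
proof (cases "n \<le> \<lfloor>z\<rfloor>")
  case True
  then have "frac z \<le> \<bar>z - of_int n\<bar>"
    using frac_ge_0[of z] by (simp add: frac_def)
  then show ?thesis
    unfolding dZ_def by linarith
next
  case False
  then have "1 - frac z \<le> \<bar>z - of_int n\<bar>"
    using frac_lt_1[of z] by (simp add: frac_def)
  then show ?thesis
    unfolding dZ_def by linarith
qed

lemma dZ_attained: "\<exists>n::int. dZ z = \<bar>z - of_int n\<bar>"
proof (cases "frac z \<le> 1 - frac z")
  case True
  then have "dZ z = \<bar>z - of_int \<lfloor>z\<rfloor>\<bar>"
    unfolding dZ_def using frac_ge_0[of z] by (simp add: frac_def)
  then show ?thesis
    by blast
next
  case False
  then have "dZ z = \<bar>z - of_int (\<lfloor>z\<rfloor> + 1)\<bar>"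
    unfolding dZ_def using frac_lt_1[of z] by (simp add: frac_def)
  then show ?thesis
    by blast
qed

lemma dZ_nonneg: "0 \<le> dZ z"
  unfolding dZ_def using frac_ge_0[of z] frac_lt_1[of z] by simp

lemma dZ_le_half: "dZ z \<le> 1 / 2"
  unfolding dZ_def by (auto simp: min_def)

lemma dZ_diff_le: "dZ (u - v) \<le> dZ u + dZ v"
proof -
  obtain p r :: int where p: "dZ u = \<bar>u - of_int p\<bar>" and r: "dZ v = \<bar>v - of_int r\<bar>"
    using dZ_attained by metis
  have "dZ (u - v) \<le> \<bar>(u - of_int p) - (v - of_int r)\<bar>"
    using dZ_le_abs_diff_int[of "u - v" "p - r"] by (simp add: algebra_simps)
  then show ?thesis
    using p r by linarith
qed

lemma cf_dist_le_dZ: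
  assumes "x \<notin> \<rat>" and "m \<noteq> 0" and "\<bar>m\<bar> < cf_q x (Suc n)"
  shows "cf_dist x n \<le> dZ (of_int m * x)"
  using cf_best_approximation[OF assms] dZ_attained by metis

lemma cf_dist_ge:
  assumes irr: "x \<notin> \<rat>"
  shows "1 / (2 * of_int (cf_q x (Suc n))) \<le> cf_dist x n"
proof -
  have "1 = of_int (cf_q x (Suc n)) * cf_dist x n + of_int (cf_q x n) * cf_dist x (Suc n)"
    using cf_q_cf_dist_eq_1[OF irr] by simp
  also have "\<dots> \<le> of_int (cf_q x (Suc n)) * cf_dist x n + of_int (cf_q x n) * cf_dist x n"
    using cf_dist_Suc_le[OF irr] cf_q_nonneg[OF irr] by (simp add: mult_left_mono)
  also have "\<dots> \<le> 2 * of_int (cf_q x (Suc n)) * cf_dist x n"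
    using cf_q_mono[OF irr, of n "Suc n"] cf_dist_pos[OF irr, of n] by (simp add: mult_right_mono)
  finally show ?thesis
    using cf_q_pos[OF irr, of "Suc n"] by (simp add: field_simps)
qed

lemma diophantine_cf_q_growth:
  assumes "diophantine x"
  obtains K \<tau> :: real where "1 \<le> K" and "1 \<le> \<tau>"
    and "\<And>n. 1 \<le> n \<Longrightarrow> of_int (cf_q x (Suc n)) \<le> K * of_int (cf_q x n) powr \<tau>"
proof -
  have irr: "x \<notin> \<rat>"
    using assms unfolding diophantine_def by blast
  obtain B where B: "\<And>n. ln (real_of_int (cf_q x (Suc (Suc n)))) / ln (real_of_int (cf_q x (Suc n))) \<le> B"
    using assms unfolding diophantine_def bdd_above_def cf_denom_eq_cf_q by auto
  define \<tau> where "\<tau> = max B 1"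
  \<comment> \<open>the ratio of logarithms says nothing while \<open>cf_q x n = 1\<close>, i.e. for \<open>n \<le> 2\<close>; \<open>K\<close> absorbs these\<close>
  define K where "K = real_of_int (cf_q x 3)"
  have q3: "2 \<le> cf_q x 3"
    using cf_q_ge_index[OF irr, of 2] by (simp add: numeral_3_eq_3)
  have "of_int (cf_q x (Suc n)) \<le> K * of_int (cf_q x n) powr \<tau>" if "1 \<le> n" for n
  proof (cases "2 \<le> cf_q x n")
    case True
    have lnq: "0 < ln (real_of_int (cf_q x n))"
      using True by simp
    have "ln (real_of_int (cf_q x (Suc n))) \<le> B * ln (real_of_int (cf_q x n))"
      using B[of "n - 1"] that lnq by (simp add: divide_le_eq)
    also have "\<dots> \<le> \<tau> * ln (real_of_int (cf_q x n))"
      using lnq unfolding \<tau>_def by (simp add: mult_right_mono)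
    finally have "ln (real_of_int (cf_q x (Suc n))) \<le> ln (real_of_int (cf_q x n) powr \<tau>)"
      by simp
    then have "of_int (cf_q x (Suc n)) \<le> of_int (cf_q x n) powr \<tau>"
      using cf_q_pos[OF irr, of "Suc n"] True by (subst (asm) ln_le_cancel_iff) auto
    also have "\<dots> \<le> K * of_int (cf_q x n) powr \<tau>"
      using q3 unfolding K_def by (simp add: mult_le_cancel_right1)
    finally show ?thesis .
  next
    case False
    then have "cf_q x n = 1"
      using cf_q_pos[OF irr, of n] that by simp
    then have "n < 3"
      using q3 cf_q_mono[OF irr, of 3 n] by (cases "3 \<le> n") auto
    then show ?thesis
      using \<open>cf_q x n = 1\<close> cf_q_mono[OF irr, of "Suc n" 3] unfolding K_def by simp
  qed
  moreover have "1 \<le> K"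
    using q3 unfolding K_def by simp
  ultimately show thesis
    using that[of K \<tau>] unfolding \<tau>_def by simp
qed

lemma diophantine_dZ_lower_bound:
  assumes dio: "diophantine x"
  obtains C \<tau> :: real where "0 < C" and "1 \<le> \<tau>"
    and "\<And>m::int. m \<noteq> 0 \<Longrightarrow> C * \<bar>of_int m\<bar> powr (- \<tau>) \<le> dZ (of_int m * x)"
proof -
  have irr: "x \<notin> \<rat>"
    using dio unfolding diophantine_def by blast
  obtain K \<tau> :: real where K: "1 \<le> K" and \<tau>: "1 \<le> \<tau>"
    and growth: "\<And>n. 1 \<le> n \<Longrightarrow> of_int (cf_q x (Suc n)) \<le> K * of_int (cf_q x n) powr \<tau>"
    using diophantine_cf_q_growth[OF dio] by blast
  have "1 / (2 * K) * \<bar>of_int m\<bar> powr (- \<tau>) \<le> dZ (of_int m * x)" if "m \<noteq> 0" for m :: int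
  proof -
    define N where "N = (LEAST N. \<bar>m\<bar> < cf_q x N)"
    have "\<bar>m\<bar> < cf_q x (Suc (Suc (nat \<bar>m\<bar>)))"
      using cf_q_ge_index[OF irr, of "Suc (nat \<bar>m\<bar>)"] by simp
    then have less: "\<bar>m\<bar> < cf_q x N"
      unfolding N_def by (rule LeastI)
    have "N \<noteq> 0"
      using less by (rule contrapos_pn) simp
    moreover have "N \<noteq> Suc 0"
    proof
      assume "N = Suc 0"
      with less \<open>m \<noteq> 0\<close> show False
        by simp
    qed
    ultimately obtain n where n: "N = Suc n" and "1 \<le> n"
      by (cases N) auto
    then have "real_of_int (cf_q x n) \<le> \<bar>of_int m\<bar>"
      using not_less_Least[of n "\<lambda>N. \<bar>m\<bar> < cf_q x N"] unfolding N_def by simp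
    then have "K * of_int (cf_q x n) powr \<tau> \<le> K * \<bar>of_int m\<bar> powr \<tau>"
      using cf_q_pos[OF irr, of n] \<open>1 \<le> n\<close> K \<tau> by (intro mult_left_mono powr_mono2) auto
    then have "of_int (cf_q x (Suc n)) \<le> K * \<bar>of_int m\<bar> powr \<tau>"
      using growth[OF \<open>1 \<le> n\<close>] by linarith
    then have "1 / (2 * (K * \<bar>of_int m\<bar> powr \<tau>)) \<le> 1 / (2 * of_int (cf_q x (Suc n)))"
      using cf_q_pos[OF irr, of "Suc n"] by (intro frac_le) auto
    also have "\<dots> \<le> cf_dist x n"
      by (rule cf_dist_ge[OF irr])
    also have "\<dots> \<le> dZ (of_int m * x)"
      using cf_dist_le_dZ[OF irr \<open>m \<noteq> 0\<close>] less n by simp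
    finally show ?thesis
      using \<open>m \<noteq> 0\<close> by (simp add: powr_minus field_simps)
  qed
  then show thesis
    using K \<tau> by (intro that[of "1 / (2 * K)" \<tau>]) auto
qed

lemma abs_index_ge_of_closer_shift:
  fixes \<alpha> y C \<tau> :: real and k k' :: int
  assumes C: "0 < C" and \<tau>: "1 \<le> \<tau>"
    and bound: "\<And>m::int. m \<noteq> 0 \<Longrightarrow> C * \<bar>of_int m\<bar> powr (- \<tau>) \<le> dZ (of_int m * \<alpha>)"
    and "k' \<noteq> k" and "\<bar>k\<bar> \<le> \<bar>k'\<bar>"
    and closer: "dZ (y - of_int k' * \<alpha>) \<le> dZ (y - of_int k * \<alpha>)"
    and pos: "0 < dZ (y - of_int k * \<alpha>)"
  shows "(C / 2) powr (1 / \<tau>) / 2 * dZ (y - of_int k * \<alpha>) powr (- (1 / \<tau>)) \<le> \<bar>of_int k'\<bar>"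
proof -
  define d where "d = dZ (y - of_int k * \<alpha>)"
  define m where "m = k' - k"
  have "m \<noteq> 0" and m_le: "\<bar>real_of_int m\<bar> \<le> 2 * \<bar>of_int k'\<bar>"
    using assms(4,5) unfolding m_def by linarith+
  have "dZ (of_int m * \<alpha>) = dZ ((y - of_int k * \<alpha>) - (y - of_int k' * \<alpha>))"
    unfolding m_def by (simp add: algebra_simps)
  also have "\<dots> \<le> 2 * d"
    using dZ_diff_le[of "y - of_int k * \<alpha>" "y - of_int k' * \<alpha>"] closer unfolding d_def by linarith
  finally have "C * \<bar>of_int m\<bar> powr (- \<tau>) \<le> 2 * d"
    using bound[OF \<open>m \<noteq> 0\<close>] by linarith
  then have "C / (2 * d) \<le> \<bar>of_int m\<bar> powr \<tau>"
    using \<open>m \<noteq> 0\<close> pos unfolding d_def by (simp add: powr_minus field_simps)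
  also have "\<dots> \<le> (2 * \<bar>of_int k'\<bar>) powr \<tau>"
    using m_le \<tau> by (intro powr_mono2) auto
  finally have "(C / (2 * d)) powr (1 / \<tau>) \<le> ((2 * \<bar>of_int k'\<bar>) powr \<tau>) powr (1 / \<tau>)"
    using C pos \<tau> unfolding d_def by (intro powr_mono2) auto
  also have "\<dots> = 2 * \<bar>of_int k'\<bar>"
    using \<tau> by (simp add: powr_powr)
  also have "(C / (2 * d)) powr (1 / \<tau>) = (C / 2) powr (1 / \<tau>) * d powr (- (1 / \<tau>))"
    using C pos unfolding d_def by (simp add: powr_divide powr_minus_divide powr_mult field_simps)
  finally show ?thesis
    unfolding d_def by simp
qed

lemma resonance_exp_le_dZ_powr:
  assumes "resonance \<alpha> \<theta> \<epsilon>0 k" and "0 \<le> c" and pos: "0 < dZ (2 * \<theta> - of_int k * \<alpha>)"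
  shows "exp (c * \<epsilon>0 * of_int \<bar>k\<bar>) \<le> dZ (2 * \<theta> - of_int k * \<alpha>) powr (- c)"
proof -
  have "ln (dZ (2 * \<theta> - of_int k * \<alpha>)) \<le> - of_int \<bar>k\<bar> * \<epsilon>0"
    using assms(1) pos ln_le_cancel_iff[of _ "exp (- of_int \<bar>k\<bar> * \<epsilon>0)"]
    unfolding resonance_def by simp
  then have "c * \<epsilon>0 * of_int \<bar>k\<bar> \<le> - c * ln (dZ (2 * \<theta> - of_int k * \<alpha>))"
    using mult_left_mono[OF _ \<open>0 \<le> c\<close>] by (fastforce simp: algebra_simps)
  then show ?thesis
    using pos by (simp add: powr_def)
qed

theorem lemma3p1:
  fixes \<alpha> \<epsilon>0 :: real
  assumes "diophantine \<alpha>" and "\<epsilon>0 > 0"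
  shows "\<exists>c>0. \<forall>\<theta>::real. \<forall>k. resonance \<alpha> \<theta> \<epsilon>0 k \<longrightarrow>
           (dZ (2 * \<theta> - of_int k * \<alpha>) > 0 \<longrightarrow>
              c * dZ (2 * \<theta> - of_int k * \<alpha>) powr (- c) \<ge> c * exp (c * \<epsilon>0 * of_int \<bar>k\<bar>)) \<and>
           (\<forall>k'. resonance \<alpha> \<theta> \<epsilon>0 k' \<and> k' \<noteq> k \<and> \<bar>k\<bar> \<le> \<bar>k'\<bar> \<longrightarrow>
              of_int \<bar>k'\<bar> \<ge> c * dZ (2 * \<theta> - of_int k * \<alpha>) powr (- c))"
proof -
  obtain C \<tau> :: real where C: "0 < C" and \<tau>: "1 \<le> \<tau>"
    and bound: "\<And>m::int. m \<noteq> 0 \<Longrightarrow> C * \<bar>of_int m\<bar> powr (- \<tau>) \<le> dZ (of_int m * \<alpha>)"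
    using diophantine_dZ_lower_bound[OF assms(1)] by blast
  define A where "A = (C / 2) powr (1 / \<tau>) / 2"
  define c where "c = min (1 / \<tau>) A"
  have c: "0 < c" "c \<le> 1 / \<tau>" "c \<le> A"
    using C \<tau> unfolding c_def A_def by auto
  show ?thesis
  proof (intro exI[of _ c] conjI allI impI c(1))
    fix \<theta> :: real and k k' :: int
    let ?d = "dZ (2 * \<theta> - of_int k * \<alpha>)"
    assume res: "resonance \<alpha> \<theta> \<epsilon>0 k"
    show "c * exp (c * \<epsilon>0 * of_int \<bar>k\<bar>) \<le> c * ?d powr (- c)" if "0 < ?d"
      using resonance_exp_le_dZ_powr[OF res _ that] c(1) by simp
    assume "resonance \<alpha> \<theta> \<epsilon>0 k' \<and> k' \<noteq> k \<and> \<bar>k\<bar> \<le> \<bar>k'\<bar>"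
    then have "k' \<noteq> k" "\<bar>k\<bar> \<le> \<bar>k'\<bar>" and closer: "dZ (2 * \<theta> - of_int k' * \<alpha>) \<le> ?d"
      unfolding resonance_def by auto
    show "c * ?d powr (- c) \<le> of_int \<bar>k'\<bar>"
    proof (cases "?d = 0")
      case False
      then have "0 < ?d" and "?d \<le> 1"
        using dZ_nonneg[of "2 * \<theta> - of_int k * \<alpha>"] dZ_le_half[of "2 * \<theta> - of_int k * \<alpha>"] by auto
      then have "c * ?d powr (- c) \<le> A * ?d powr (- (1 / \<tau>))"
        using c by (intro mult_mono powr_mono') auto
      also have "\<dots> \<le> of_int \<bar>k'\<bar>"
        unfolding A_def using abs_index_ge_of_closer_shift[OF C \<tau> bound \<open>k' \<noteq> k\<close> \<open>\<bar>k\<bar> \<le> \<bar>k'\<bar>\<close> closer \<open>0 < ?d\<close>]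
        by simp
      finally show ?thesis .
    qed simp
  qed
qed

end
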